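(* Let $\mathcal{G}$ be a finite-dimensional solvable Lie algebra with a vector space decomposition $\mathcal{G}=\bigoplus_{p\in I}V_p$ satisfying $[V_p,V_q]\subset\bigoplus_{r\in i(p,q)}V_r$ for a map $i:I\times I\to 2^I$, and let $S$ be a finite abelian semigroup with a decomposition $S=\bigcup_{p\in I}S_p$ into subsets satisfying the resonance condition $S_p\cdot S_q\subset\bigcap_{r\in i(p,q)}S_r$. Then the resonant subalgebra $\mathcal{G}_{S,R}=\bigoplus_{p\in I}S_p\otimes V_p$ of the $S$-expanded algebra $\mathcal{G}_S=S\otimes\mathcal{G}$ is solvable.
   Context: For a Lie algebra $\mathcal{G}$ with basis $\{X_i\}$, $[X_i,X_j]=C_{ij}^kX_k$, and a finite abelian semigroup $S=\{\lambda_\alpha\}$ with 2-selector $K_{\alpha\beta}^\gamma$ ($=1$ if $\lambda_\alpha\lambda_\beta=\lambda_\gamma$, else $0$), the $S$-expanded algebra $\mathcal{G}_S=S\otimes\mathcal{G}$ has basis $\lambda_\alpha\otimes X_i$ and bracket $[\lambda_\alpha\otimes X_i,\lambda_\beta\otimes X_j]=K_{\alpha\beta}^\gamma C_{ij}^k\,\lambda_\gamma\otimes X_k$. Here $S_p\cdot S_q$ denotes the set of all products of an element of $S_p$ with an element of $S_q$; under the resonance condition, $\bigoplus_p S_p\otimes V_p$ (spanned by $\lambda_{\alpha}\otimes v$ with $\lambda_\alpha\in S_p$, $v\in V_p$) is a subalgebra of $\mathcal{G}_S$, called the resonant subalgebra. *)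

theory Defs
  imports "HOL-Analysis.Finite_Cartesian_Product"
begin

definition lie_algebra :: "('v::real_vector \<Rightarrow> 'v \<Rightarrow> 'v) \<Rightarrow> bool" where
  "lie_algebra br \<longleftrightarrow>
     (\<forall>x. linear (br x)) \<and> (\<forall>y. linear (\<lambda>x. br x y)) \<and>
     (\<forall>x. br x x = 0) \<and>
     (\<forall>x y z. br x (br y z) + br y (br z x) + br z (br x y) = 0)"

definition finite_dimensional :: "'v::real_vector itself \<Rightarrow> bool" where
  "finite_dimensional _ \<longleftrightarrow> (\<exists>B::'v set. finite B \<and> span B = UNIV)"

primrec derived :: "('v::real_vector \<Rightarrow> 'v \<Rightarrow> 'v) \<Rightarrow> 'v set \<Rightarrow> nat \<Rightarrow> 'v set" where
  "derived br L 0 = L"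
| "derived br L (Suc n) = span {br x y | x y. x \<in> derived br L n \<and> y \<in> derived br L n}"

definition solvable :: "('v::real_vector \<Rightarrow> 'v \<Rightarrow> 'v) \<Rightarrow> 'v set \<Rightarrow> bool" where
  "solvable br L \<longleftrightarrow> (\<exists>n. derived br L n = {0})"

definition direct_sum_decomp :: "'i set \<Rightarrow> ('i \<Rightarrow> 'v::real_vector set) \<Rightarrow> bool" where
  "direct_sum_decomp I V \<longleftrightarrow>
     (\<forall>p\<in>I. subspace (V p)) \<and>
     span (\<Union>p\<in>I. V p) = UNIV \<and>
     (\<forall>p\<in>I. V p \<inter> span (\<Union>q\<in>I - {p}. V q) = {0})"

text \<open>The S-expanded algebra S \<otimes> G, modelled as 'v ^ 's (the element
  \<lambda>_\<alpha> \<otimes> X is axis \<alpha> X).  The bracket is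
  [\<lambda>_\<alpha> \<otimes> X, \<lambda>_\<beta> \<otimes> Y] = \<lambda>_{\<alpha>\<beta>} \<otimes> [X,Y], extended bilinearly.\<close>
definition expanded_bracket ::
  "('v::real_vector \<Rightarrow> 'v \<Rightarrow> 'v) \<Rightarrow> ('v, 's::{finite,ab_semigroup_mult}) vec \<Rightarrow> ('v, 's) vec \<Rightarrow> ('v, 's) vec" where
  "expanded_bracket br f g =
     (\<chi> \<gamma>. \<Sum>\<alpha>\<in>UNIV. \<Sum>\<beta>\<in>UNIV. if \<alpha> * \<beta> = \<gamma> then br (f $ \<alpha>) (g $ \<beta>) else 0)"

definition resonant_subalgebra ::
  "'i set \<Rightarrow> ('i \<Rightarrow> 's::{finite,ab_semigroup_mult} set) \<Rightarrow> ('i \<Rightarrow> 'v::real_vector set) \<Rightarrow> ('v, 's) vec set" where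
  "resonant_subalgebra I S V =
     span {axis \<alpha> v | \<alpha> v p. p \<in> I \<and> \<alpha> \<in> S p \<and> v \<in> V p}"

end

theory Submission
  imports Defs
begin

text \<open>A bracket in \<open>S \<otimes> \<G>\<close> only multiplies the semigroup labels, so every component of
  an element of its \<open>n\<close>-th derived algebra lies in the \<open>n\<close>-th derived algebra of \<open>\<G>\<close>; once
  the latter is zero, so is the former. The resonant subalgebra, being a subspace of a solvable
  algebra, is then solvable by monotonicity of the derived series.\<close>

lemma derived_mono: "L \<subseteq> M \<Longrightarrow> derived br L n \<subseteq> derived br M n"
  by (induction n) (auto intro!: span_mono)

lemma subspace_derived: "subspace L \<Longrightarrow> subspace (derived br L n)"
  by (cases n) (simp_all add: subspace_span)

lemma solvable_subspace:
  assumes "solvable br M" and "L \<subseteq> M" and "subspace L"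
  shows "solvable br L"
proof -
  obtain n where "derived br M n = {0}"
    using assms(1) unfolding solvable_def by blast
  moreover have "0 \<in> derived br L n"
    using subspace_derived[OF assms(3)] by (rule subspace_0)
  ultimately have "derived br L n = {0}"
    using derived_mono[OF assms(2)] by blast
  then show ?thesis
    unfolding solvable_def by blast
qed

lemma subspace_componentwise:
  "subspace D \<Longrightarrow> subspace {f :: ('v::real_vector, 's::finite) vec. \<forall>a. f $ a \<in> D}"
  unfolding subspace_def by auto

lemma expanded_bracket_component_mem:
  fixes x y :: "('v::real_vector, 's::{finite,ab_semigroup_mult}) vec"
  assumes "subspace D" and "\<And>a b. br (x $ a) (y $ b) \<in> D"
  shows "expanded_bracket br x y $ c \<in> D"
  unfolding expanded_bracket_def
  using assms by (auto intro!: subspace_sum simp: subspace_0)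

lemma derived_expanded_component:
  "f \<in> derived (expanded_bracket br) (UNIV :: ('v::real_vector, 's::{finite,ab_semigroup_mult}) vec set) n
    \<Longrightarrow> f $ a \<in> derived br UNIV n"
proof (induction n arbitrary: f a)
  case 0
  then show ?case by simp
next
  case (Suc n)
  let ?D = "derived br (UNIV :: 'v set) (Suc n)"
  have "subspace ?D"
    by (rule subspace_derived[OF subspace_UNIV])
  then have brackets_componentwise:
    "{expanded_bracket br x y | x y. x \<in> derived (expanded_bracket br) (UNIV :: ('v, 's) vec set) n
        \<and> y \<in> derived (expanded_bracket br) UNIV n} \<subseteq> {f. \<forall>a. f $ a \<in> ?D}"
  proof clarify
    fix x y :: "('v, 's) vec" and c :: 's
    assume "x \<in> derived (expanded_bracket br) UNIV n" "y \<in> derived (expanded_bracket br) UNIV n"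
    then have "\<And>a b. br (x $ a) (y $ b) \<in> ?D"
      using Suc.IH by (auto intro!: span_base)
    with \<open>subspace ?D\<close> show "expanded_bracket br x y $ c \<in> ?D"
      by (rule expanded_bracket_component_mem)
  qed
  have "derived (expanded_bracket br) (UNIV :: ('v, 's) vec set) (Suc n) \<subseteq> {f. \<forall>a. f $ a \<in> ?D}"
    using span_minimal[OF brackets_componentwise subspace_componentwise[OF \<open>subspace ?D\<close>]] by simp
  then show ?case
    using Suc.prems by blast
qed

lemma solvable_expanded_algebra:
  assumes "solvable br (UNIV :: 'v::real_vector set)"
  shows "solvable (expanded_bracket br) (UNIV :: ('v, 's::{finite,ab_semigroup_mult}) vec set)"
proof -
  obtain n where n: "derived br (UNIV :: 'v set) n = {0}"
    using assms unfolding solvable_def by blast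
  have "derived (expanded_bracket br) (UNIV :: ('v, 's) vec set) n \<subseteq> {0}"
  proof
    fix f assume "f \<in> derived (expanded_bracket br) (UNIV :: ('v, 's) vec set) n"
    then have "\<forall>a. f $ a = 0"
      using derived_expanded_component n by blast
    then show "f \<in> {0}"
      by (simp add: vec_eq_iff)
  qed
  moreover have "0 \<in> derived (expanded_bracket br) (UNIV :: ('v, 's) vec set) n"
    using subspace_derived[OF subspace_UNIV] by (rule subspace_0)
  ultimately show ?thesis
    unfolding solvable_def by blast
qed

theorem theorem2:
  fixes br :: "'v::real_vector \<Rightarrow> 'v \<Rightarrow> 'v"
    and I :: "'i set"
    and V :: "'i \<Rightarrow> 'v set"
    and ind :: "'i \<Rightarrow> 'i \<Rightarrow> 'i set"
    and S :: "'i \<Rightarrow> ('s::{finite,ab_semigroup_mult}) set"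
  assumes "lie_algebra br"
    and "finite_dimensional TYPE('v)"
    and "solvable br UNIV"
    and "direct_sum_decomp I V"
    and "\<forall>p\<in>I. \<forall>q\<in>I. ind p q \<subseteq> I"
    and "\<forall>p\<in>I. \<forall>q\<in>I. \<forall>x\<in>V p. \<forall>y\<in>V q. br x y \<in> span (\<Union>r\<in>ind p q. V r)"
    and "(\<Union>p\<in>I. S p) = UNIV"
    and "\<forall>p\<in>I. \<forall>q\<in>I. \<forall>a\<in>S p. \<forall>b\<in>S q. \<forall>r\<in>ind p q. a * b \<in> S r"
  shows "solvable (expanded_bracket br) (resonant_subalgebra I S V)"
proof (rule solvable_subspace)
  show "solvable (expanded_bracket br) (UNIV :: ('v, 's) vec set)"
    using assms(3) by (rule solvable_expanded_algebra)
  show "resonant_subalgebra I S V \<subseteq> UNIV"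
    by simp
  show "subspace (resonant_subalgebra I S V)"
    unfolding resonant_subalgebra_def by (rule subspace_span)
qed

end
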